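(* For every $\mathcal{C}$-algebra $A$, the derived operation $\widetilde{\omega}_{\Phi(A)}$ on $s_A(|A|)$, defined by $\widetilde{\omega}_{\Phi(A)}(u_1,\dots,u_k)=\Phi(\theta)(\tilde{\mathbf w})$ (where $u_i=s_A(a_i)$ with $a_i\in A$, $\theta:F\to A$ is the homomorphism with $\theta(x_i)=a_i$ for $i=1,\dots,k$, and $\tilde{\mathbf w}=s_F(\omega(x_1,\dots,x_k))\in\Phi(F)$), coincides with the induced operation $\omega^*_A$ on $s_A(|A|)$, that is, $$s_A(\omega_A(a_1,\dots,a_k))=\widetilde{\omega}_{\Phi(A)}(s_A(a_1),\dots,s_A(a_k))$$ for all $a_1,\dots,a_k\in A$.
   Context: Let $\mathcal{V}$ be a variety of universal algebras of signature $\Omega$, and let $\mathrm{Th}^0(\mathcal{V})$ be the category of free $\mathcal{V}$-algebras over finite subsets of a fixed infinite set of variables, with their homomorphisms; it carries the forgetful functor to sets assigning to an algebra $A$ its underlying set $|A|$. Let $\mathcal{C}$ be a full subcategory of $\mathrm{Th}^0(\mathcal{V})$ containing the monogenic free algebra $A_0$ freely generated by $x_0$, and let $\Phi$ be an automorphism of $\mathcal{C}$. For a $\mathcal{C}$-algebra $A$ and $a\in A$, let $\alpha^A_a:A_0\to A$ be the unique homomorphism with $\alpha^A_a(x_0)=a$. Fix a basis $X$ of $\Phi^{-1}(A_0)$, let $\eta_0:\Phi^{-1}(A_0)\to A_0$ be the homomorphism sending every element of $X$ to $x_0$ (if $\Phi^{-1}(A_0)\cong A_0$, take $\eta_0$ to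 be an isomorphism; if $\Phi(A_0)=A_0$, take $\eta_0=1_{A_0}$), and put $\eta=\Phi(\eta_0):A_0\to\Phi(A_0)$. The main function of $\Phi$ is the family of (injective) maps $s_A:|A|\to|\Phi(A)|$, $s_A(a)=\Phi(\alpha^A_a)\circ\eta\,(x_0)$. For a $k$-ary operation symbol $\omega\in\Omega$ with corresponding operation $\omega_A$ on $A$, the induced operation $\omega^*_A$ on $s_A(|A|)$ is defined by $\omega^*_A(s_A(a_1),\dots,s_A(a_k))=s_A(\omega_A(a_1,\dots,a_k))$. Assume all arities of operations of $\mathcal{V}$ are less than some $n$, and let $F$ be a $\mathcal{C}$-algebra with basis $\{x_1,\dots,x_n\}$; set $\mathbf w=\omega(x_1,\dots,x_k)\in F$ and $\tilde{\mathbf w}=s_F(\mathbf w)\in\Phi(F)$. *)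

theory Defs
  imports Main "HOL-Library.FuncSet"
begin

datatype ('o,'v) trm = Var 'v | Op 'o "('o,'v) trm list"

fun wf_trm :: "('o \<Rightarrow> nat) \<Rightarrow> ('o,'v) trm \<Rightarrow> bool" where
  "wf_trm ar (Var x) = True"
| "wf_trm ar (Op f ts) = (length ts = ar f \<and> (\<forall>t\<in>set ts. wf_trm ar t))"

fun vars :: "('o,'v) trm \<Rightarrow> 'v set" where
  "vars (Var x) = {x}"
| "vars (Op f ts) = (\<Union>t\<in>set ts. vars t)"

fun subst :: "('v \<Rightarrow> ('o,'v) trm) \<Rightarrow> ('o,'v) trm \<Rightarrow> ('o,'v) trm" where
  "subst \<sigma> (Var x) = \<sigma> x"
| "subst \<sigma> (Op f ts) = Op f (map (subst \<sigma>) ts)"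

fun eval :: "('o \<Rightarrow> 'c list \<Rightarrow> 'c) \<Rightarrow> ('v \<Rightarrow> 'c) \<Rightarrow> ('o,'v) trm \<Rightarrow> 'c" where
  "eval ops \<rho> (Var x) = \<rho> x"
| "eval ops \<rho> (Op f ts) = ops f (map (eval ops \<rho>) ts)"

section \<open>Varieties, given by a set E of identities (Birkhoff)\<close>

definition variety :: "('o \<Rightarrow> nat) \<Rightarrow> (('o,'v) trm \<times> ('o,'v) trm) set \<Rightarrow> bool" where
  "variety ar E \<longleftrightarrow> (\<forall>(l,r)\<in>E. wf_trm ar l \<and> wf_trm ar r)"

inductive eq_deriv :: "('o \<Rightarrow> nat) \<Rightarrow> (('o,'v) trm \<times> ('o,'v) trm) set
    \<Rightarrow> ('o,'v) trm \<Rightarrow> ('o,'v) trm \<Rightarrow> bool" for ar E where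
  ax: "(l,r) \<in> E \<Longrightarrow> (\<forall>x. wf_trm ar (\<sigma> x)) \<Longrightarrow> eq_deriv ar E (subst \<sigma> l) (subst \<sigma> r)"
| refl: "wf_trm ar t \<Longrightarrow> eq_deriv ar E t t"
| sym: "eq_deriv ar E s t \<Longrightarrow> eq_deriv ar E t s"
| trans: "eq_deriv ar E s t \<Longrightarrow> eq_deriv ar E t u \<Longrightarrow> eq_deriv ar E s u"
| cong: "length ss = ar f \<Longrightarrow> length ts = ar f \<Longrightarrow> (\<forall>i<ar f. eq_deriv ar E (ss!i) (ts!i))
          \<Longrightarrow> eq_deriv ar E (Op f ss) (Op f ts)"

type_synonym ('o,'c) alg = "'c set \<times> ('o \<Rightarrow> 'c list \<Rightarrow> 'c)"

definition is_alg :: "('o \<Rightarrow> nat) \<Rightarrow> ('o,'c) alg \<Rightarrow> bool" where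
  "is_alg ar A \<longleftrightarrow> (\<forall>f as. length as = ar f \<and> set as \<subseteq> fst A \<longrightarrow> snd A f as \<in> fst A)"

definition models :: "('o \<Rightarrow> nat) \<Rightarrow> (('o,'v) trm \<times> ('o,'v) trm) set \<Rightarrow> ('o,'c) alg \<Rightarrow> bool" where
  "models ar E A \<longleftrightarrow> is_alg ar A \<and>
     (\<forall>(l,r)\<in>E. \<forall>\<rho>::'v \<Rightarrow> 'c. \<rho> \<in> UNIV \<rightarrow> fst A \<longrightarrow> eval (snd A) \<rho> l = eval (snd A) \<rho> r)"

definition is_hom :: "('o \<Rightarrow> nat) \<Rightarrow> ('o,'a) alg \<Rightarrow> ('o,'b) alg \<Rightarrow> ('a \<Rightarrow> 'b) \<Rightarrow> bool" where
  "is_hom ar A B h \<longleftrightarrow> h \<in> fst A \<rightarrow> fst B \<and>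
     (\<forall>f as. length as = ar f \<and> set as \<subseteq> fst A \<longrightarrow> h (snd A f as) = snd B f (map h as))"

section \<open>Free V-algebras F(X) over sets X of variables (terms modulo derivable equality)\<close>

definition cls :: "('o \<Rightarrow> nat) \<Rightarrow> (('o,'v) trm \<times> ('o,'v) trm) set \<Rightarrow> ('o,'v) trm \<Rightarrow> ('o,'v) trm set" where
  "cls ar E t = {s. eq_deriv ar E s t}"

definition fcarrier :: "('o \<Rightarrow> nat) \<Rightarrow> (('o,'v) trm \<times> ('o,'v) trm) set \<Rightarrow> 'v set \<Rightarrow> ('o,'v) trm set set" where
  "fcarrier ar E X = {cls ar E t | t. wf_trm ar t \<and> vars t \<subseteq> X}"

definition fops :: "('o \<Rightarrow> nat) \<Rightarrow> (('o,'v) trm \<times> ('o,'v) trm) set \<Rightarrow> 'o \<Rightarrow> ('o,'v) trm set list \<Rightarrow> ('o,'v) trm set" where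
  "fops ar E f cs = cls ar E (Op f (map (\<lambda>c. SOME t. t \<in> c) cs))"

definition FA :: "('o \<Rightarrow> nat) \<Rightarrow> (('o,'v) trm \<times> ('o,'v) trm) set \<Rightarrow> 'v set \<Rightarrow> ('o, ('o,'v) trm set) alg" where
  "FA ar E X = (fcarrier ar E X, fops ar E)"

section \<open>The category Th0(V): objects are finite sets of variables X (standing for F(X))\<close>

definition Hom :: "('o \<Rightarrow> nat) \<Rightarrow> (('o,'v) trm \<times> ('o,'v) trm) set \<Rightarrow> 'v set \<Rightarrow> 'v set
    \<Rightarrow> (('o,'v) trm set \<Rightarrow> ('o,'v) trm set) set" where
  "Hom ar E X Y = {h. is_hom ar (FA ar E X) (FA ar E Y) h \<and> h \<in> extensional (fcarrier ar E X)}"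

definition idm :: "('o \<Rightarrow> nat) \<Rightarrow> (('o,'v) trm \<times> ('o,'v) trm) set \<Rightarrow> 'v set
    \<Rightarrow> ('o,'v) trm set \<Rightarrow> ('o,'v) trm set" where
  "idm ar E X = restrict id (fcarrier ar E X)"

definition iso_mor :: "('o \<Rightarrow> nat) \<Rightarrow> (('o,'v) trm \<times> ('o,'v) trm) set \<Rightarrow> 'v set \<Rightarrow> 'v set
    \<Rightarrow> (('o,'v) trm set \<Rightarrow> ('o,'v) trm set) \<Rightarrow> bool" where
  "iso_mor ar E X Y h \<longleftrightarrow> h \<in> Hom ar E X Y \<and>
     (\<exists>g\<in>Hom ar E Y X. compose (fcarrier ar E X) g h = idm ar E X \<and> compose (fcarrier ar E Y) h g = idm ar E Y)"

text \<open>B is a basis of F(X): F(X) is free in V over B (universal property w.r.t. V-algebras;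
  carriers of type ('o,'v) trm set are large enough to contain a free V-algebra over B).\<close>
definition free_basis :: "('o \<Rightarrow> nat) \<Rightarrow> (('o,'v) trm \<times> ('o,'v) trm) set \<Rightarrow> 'v set
    \<Rightarrow> ('o,'v) trm set set \<Rightarrow> bool" where
  "free_basis ar E X B \<longleftrightarrow> B \<subseteq> fcarrier ar E X \<and>
     (\<forall>G :: ('o, ('o,'v) trm set) alg. models ar E G \<longrightarrow>
        (\<forall>g \<in> B \<rightarrow> fst G. \<exists>!h. h \<in> extensional (fcarrier ar E X) \<and>
            is_hom ar (FA ar E X) G h \<and> (\<forall>b\<in>B. h b = g b)))"

definition cat_auto :: "('o \<Rightarrow> nat) \<Rightarrow> (('o,'v) trm \<times> ('o,'v) trm) set \<Rightarrow> 'v set set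
    \<Rightarrow> ('v set \<Rightarrow> 'v set)
    \<Rightarrow> ('v set \<Rightarrow> 'v set \<Rightarrow> (('o,'v) trm set \<Rightarrow> ('o,'v) trm set) \<Rightarrow> (('o,'v) trm set \<Rightarrow> ('o,'v) trm set))
    \<Rightarrow> bool" where
  "cat_auto ar E Ob \<Phi>o \<Phi>m \<longleftrightarrow>
     bij_betw \<Phi>o Ob Ob \<and>
     (\<forall>X\<in>Ob. \<forall>Y\<in>Ob. bij_betw (\<Phi>m X Y) (Hom ar E X Y) (Hom ar E (\<Phi>o X) (\<Phi>o Y))) \<and>
     (\<forall>X\<in>Ob. \<Phi>m X X (idm ar E X) = idm ar E (\<Phi>o X)) \<and>
     (\<forall>X\<in>Ob. \<forall>Y\<in>Ob. \<forall>Z\<in>Ob. \<forall>f\<in>Hom ar E X Y. \<forall>g\<in>Hom ar E Y Z.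
        \<Phi>m X Z (compose (fcarrier ar E X) g f)
          = compose (fcarrier ar E (\<Phi>o X)) (\<Phi>m Y Z g) (\<Phi>m X Y f))"

definition alpha :: "('o \<Rightarrow> nat) \<Rightarrow> (('o,'v) trm \<times> ('o,'v) trm) set \<Rightarrow> 'v \<Rightarrow> 'v set
    \<Rightarrow> ('o,'v) trm set \<Rightarrow> ('o,'v) trm set \<Rightarrow> ('o,'v) trm set" where
  "alpha ar E x0 A a = (THE h. h \<in> Hom ar E {x0} A \<and> h (cls ar E (Var x0)) = a)"

definition eta0_ok :: "('o \<Rightarrow> nat) \<Rightarrow> (('o,'v) trm \<times> ('o,'v) trm) set \<Rightarrow> 'v set set \<Rightarrow> 'v
    \<Rightarrow> ('v set \<Rightarrow> 'v set) \<Rightarrow> (('o,'v) trm set \<Rightarrow> ('o,'v) trm set) \<Rightarrow> bool" where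
  "eta0_ok ar E Ob x0 \<Phi>o \<eta>0 \<longleftrightarrow>
     (let P = inv_into Ob \<Phi>o {x0} in
       \<eta>0 \<in> Hom ar E P {x0} \<and>
       (\<exists>B. free_basis ar E P B \<and> (\<forall>b\<in>B. \<eta>0 b = cls ar E (Var x0))) \<and>
       ((\<exists>h. iso_mor ar E P {x0} h) \<longrightarrow> iso_mor ar E P {x0} \<eta>0) \<and>
       (\<Phi>o {x0} = {x0} \<longrightarrow> \<eta>0 = idm ar E {x0}))"

text \<open>The main function s_A(a) = Phi(alpha^A_a)(eta(x0)), with eta = Phi(eta0).\<close>
definition main_fn :: "('o \<Rightarrow> nat) \<Rightarrow> (('o,'v) trm \<times> ('o,'v) trm) set \<Rightarrow> 'v set set \<Rightarrow> 'v
    \<Rightarrow> ('v set \<Rightarrow> 'v set)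
    \<Rightarrow> ('v set \<Rightarrow> 'v set \<Rightarrow> (('o,'v) trm set \<Rightarrow> ('o,'v) trm set) \<Rightarrow> (('o,'v) trm set \<Rightarrow> ('o,'v) trm set))
    \<Rightarrow> (('o,'v) trm set \<Rightarrow> ('o,'v) trm set) \<Rightarrow> 'v set \<Rightarrow> ('o,'v) trm set \<Rightarrow> ('o,'v) trm set" where
  "main_fn ar E Ob x0 \<Phi>o \<Phi>m \<eta>0 A a =
     \<Phi>m {x0} A (alpha ar E x0 A a) (\<Phi>m (inv_into Ob \<Phi>o {x0}) {x0} \<eta>0 (cls ar E (Var x0)))"

end

theory Submission
  imports Defs
begin

text \<open>Since s_A(a) = \<Phi>(\<alpha>_a)(\<eta>(x0)), everything follows from the naturality of \<alpha>:
  a homomorphism out of the monogenic free algebra A0 is determined by the image of x0, so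
  \<alpha>_(\<theta> c) = \<theta> \<circ> \<alpha>_c for every homomorphism \<theta> : F \<rightarrow> A. Applying the functor \<Phi>
  and evaluating at \<eta>(x0) gives s_A(\<theta> c) = \<Phi>(\<theta>)(s_F(c)). For c = \<omega>(x1, ..., xk) we have
  \<theta> c = \<omega>_A(a1, ..., ak), because \<theta> is a homomorphism sending xi to ai.\<close>

lemma wf_trm_subst: "wf_trm ar t \<Longrightarrow> \<forall>x. wf_trm ar (\<sigma> x) \<Longrightarrow> wf_trm ar (subst \<sigma> t)"
  by (induction t) auto

lemma subst_subst: "subst \<tau> (subst \<sigma> t) = subst (\<lambda>x. subst \<tau> (\<sigma> x)) t"
  by (induction t) auto

lemma vars_subst: "vars (subst \<sigma> t) = (\<Union>x\<in>vars t. vars (\<sigma> x))"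
  by (induction t) auto

lemma eq_deriv_subst:
  "eq_deriv ar E s t \<Longrightarrow> \<forall>x. wf_trm ar (\<tau> x) \<Longrightarrow> eq_deriv ar E (subst \<tau> s) (subst \<tau> t)"
proof (induction rule: eq_deriv.induct)
  case (ax l r \<sigma>)
  have "eq_deriv ar E (subst (\<lambda>x. subst \<tau> (\<sigma> x)) l) (subst (\<lambda>x. subst \<tau> (\<sigma> x)) r)"
    using ax by (intro eq_deriv.ax) (auto intro: wf_trm_subst)
  then show ?case by (simp add: subst_subst)
next
  case (refl t)
  then show ?case by (simp add: eq_deriv.refl wf_trm_subst)
next
  case (sym s t)
  then show ?case by (simp add: eq_deriv.sym)
next
  case (trans s t u)
  then show ?case by (meson eq_deriv.trans)
next
  case (cong ss f ts)
  then show ?case by (auto intro!: eq_deriv.cong)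
qed

lemma cls_eqI: "eq_deriv ar E s t \<Longrightarrow> cls ar E s = cls ar E t"
  unfolding cls_def by (meson eq_deriv.sym eq_deriv.trans)

lemma eq_deriv_some_cls: "wf_trm ar t \<Longrightarrow> eq_deriv ar E (SOME u. u \<in> cls ar E t) t"
proof -
  assume "wf_trm ar t"
  then have "t \<in> cls ar E t"
    by (simp add: cls_def eq_deriv.refl)
  then have "(SOME u. u \<in> cls ar E t) \<in> cls ar E t"
    by (rule someI)
  then show ?thesis
    by (simp add: cls_def)
qed

lemma fops_map_cls:
  "length ts = ar f \<Longrightarrow> \<forall>t\<in>set ts. wf_trm ar t \<Longrightarrow>
   fops ar E f (map (cls ar E) ts) = cls ar E (Op f ts)"
  unfolding fops_def by (intro cls_eqI eq_deriv.cong) (auto intro!: eq_deriv_some_cls)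

lemma cls_in_fcarrier: "wf_trm ar t \<Longrightarrow> vars t \<subseteq> X \<Longrightarrow> cls ar E t \<in> fcarrier ar E X"
  unfolding fcarrier_def by blast

lemma subset_fcarrier_map_cls:
  "set cs \<subseteq> fcarrier ar E X \<Longrightarrow>
   \<exists>ts. cs = map (cls ar E) ts \<and> (\<forall>t\<in>set ts. wf_trm ar t \<and> vars t \<subseteq> X)"
proof (induction cs)
  case (Cons c cs)
  then obtain ts where "cs = map (cls ar E) ts" "\<forall>t\<in>set ts. wf_trm ar t \<and> vars t \<subseteq> X"
    by auto
  moreover obtain t where "c = cls ar E t" "wf_trm ar t" "vars t \<subseteq> X"
    using Cons.prems unfolding fcarrier_def by auto
  ultimately show ?case
    by (intro exI[of _ "t # ts"]) auto
qed simp

lemma fops_in_fcarrier: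
  assumes "length cs = ar f" and "set cs \<subseteq> fcarrier ar E X"
  shows "fops ar E f cs \<in> fcarrier ar E X"
proof -
  obtain ts where ts: "cs = map (cls ar E) ts" "\<forall>t\<in>set ts. wf_trm ar t \<and> vars t \<subseteq> X"
    using subset_fcarrier_map_cls[OF assms(2)] by blast
  then have "fops ar E f cs = cls ar E (Op f ts)"
    using assms(1) by (simp add: fops_map_cls)
  moreover have "wf_trm ar (Op f ts)" and "vars (Op f ts) \<subseteq> X"
    using ts assms(1) by auto
  ultimately show ?thesis
    by (simp add: cls_in_fcarrier)
qed

lemma Hom_funcset: "h \<in> Hom ar E X Y \<Longrightarrow> h \<in> fcarrier ar E X \<rightarrow> fcarrier ar E Y"
  unfolding Hom_def is_hom_def FA_def by auto

lemma Hom_fops: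
  "h \<in> Hom ar E X Y \<Longrightarrow> length cs = ar f \<Longrightarrow> set cs \<subseteq> fcarrier ar E X \<Longrightarrow>
   h (fops ar E f cs) = fops ar E f (map h cs)"
  unfolding Hom_def is_hom_def FA_def by auto

lemma HomI:
  assumes "h \<in> fcarrier ar E X \<rightarrow> fcarrier ar E Y"
    and "\<And>f cs. length cs = ar f \<Longrightarrow> set cs \<subseteq> fcarrier ar E X \<Longrightarrow>
           h (fops ar E f cs) = fops ar E f (map h cs)"
    and "h \<in> extensional (fcarrier ar E X)"
  shows "h \<in> Hom ar E X Y"
  using assms unfolding Hom_def is_hom_def FA_def by auto

lemma compose_in_Hom:
  assumes f: "f \<in> Hom ar E X Y" and g: "g \<in> Hom ar E Y Z"
  shows "compose (fcarrier ar E X) g f \<in> Hom ar E X Z"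
proof (rule HomI)
  show "compose (fcarrier ar E X) g f \<in> fcarrier ar E X \<rightarrow> fcarrier ar E Z"
    using Hom_funcset[OF f] Hom_funcset[OF g] by (auto simp: compose_def)
  fix h cs
  assume l: "length cs = ar h" and s: "set cs \<subseteq> fcarrier ar E X"
  have "set (map f cs) \<subseteq> fcarrier ar E Y"
    using s Hom_funcset[OF f] by auto
  then have "g (f (fops ar E h cs)) = fops ar E h (map (\<lambda>c. g (f c)) cs)"
    using l s by (simp add: Hom_fops[OF f] Hom_fops[OF g] comp_def)
  moreover have "map (\<lambda>c. g (f c)) cs = map (compose (fcarrier ar E X) g f) cs"
    using s by (auto simp: compose_def)
  ultimately show "compose (fcarrier ar E X) g f (fops ar E h cs)
      = fops ar E h (map (compose (fcarrier ar E X) g f) cs)"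
    using fops_in_fcarrier[OF l s] by (simp add: compose_def)
qed (simp add: compose_extensional)

text \<open>Independent of the chosen representative, since derivable equality is stable under
  substitution.\<close>
definition subst_hom :: "('o \<Rightarrow> nat) \<Rightarrow> (('o,'v) trm \<times> ('o,'v) trm) set \<Rightarrow> 'v set
    \<Rightarrow> ('v \<Rightarrow> ('o,'v) trm) \<Rightarrow> ('o,'v) trm set \<Rightarrow> ('o,'v) trm set" where
  "subst_hom ar E X \<sigma> = restrict (\<lambda>c. cls ar E (subst \<sigma> (SOME u. u \<in> c))) (fcarrier ar E X)"

lemma subst_hom_cls:
  assumes "\<forall>x. wf_trm ar (\<sigma> x)" and "wf_trm ar t" and "vars t \<subseteq> X"
  shows "subst_hom ar E X \<sigma> (cls ar E t) = cls ar E (subst \<sigma> t)"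
  using assms cls_in_fcarrier[OF assms(2,3)]
  by (auto simp: subst_hom_def intro!: cls_eqI eq_deriv_subst eq_deriv_some_cls)

lemma subst_hom_in_Hom:
  assumes wf: "\<forall>x. wf_trm ar (\<sigma> x)" and vars: "\<forall>x\<in>X. vars (\<sigma> x) \<subseteq> Y"
  shows "subst_hom ar E X \<sigma> \<in> Hom ar E X Y"
proof (rule HomI)
  show "subst_hom ar E X \<sigma> \<in> fcarrier ar E X \<rightarrow> fcarrier ar E Y"
  proof
    fix c
    assume "c \<in> fcarrier ar E X"
    then obtain t where "c = cls ar E t" "wf_trm ar t" "vars t \<subseteq> X"
      unfolding fcarrier_def by blast
    then show "subst_hom ar E X \<sigma> c \<in> fcarrier ar E Y"
      using wf vars by (force simp: subst_hom_cls vars_subst intro!: cls_in_fcarrier wf_trm_subst)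
  qed
  fix f cs
  assume l: "length cs = ar f" and "set cs \<subseteq> fcarrier ar E X"
  then obtain ts where ts: "cs = map (cls ar E) ts" "\<forall>t\<in>set ts. wf_trm ar t \<and> vars t \<subseteq> X"
    using subset_fcarrier_map_cls by blast
  have "wf_trm ar (Op f ts)" and "vars (Op f ts) \<subseteq> X"
    using ts l by auto
  then have "subst_hom ar E X \<sigma> (fops ar E f cs) = cls ar E (Op f (map (subst \<sigma>) ts))"
    using ts l wf by (simp add: fops_map_cls subst_hom_cls)
  also have "\<dots> = fops ar E f (map (cls ar E) (map (subst \<sigma>) ts))"
    using ts l wf by (intro fops_map_cls[symmetric]) (auto intro: wf_trm_subst)
  also have "map (cls ar E) (map (subst \<sigma>) ts) = map (subst_hom ar E X \<sigma>) cs"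
    using ts wf by (auto simp: subst_hom_cls)
  finally show "subst_hom ar E X \<sigma> (fops ar E f cs) = fops ar E f (map (subst_hom ar E X \<sigma>) cs)" .
qed (simp add: subst_hom_def)

lemma Hom_monogenic_eqI:
  assumes h1: "h1 \<in> Hom ar E {x0} Y" and h2: "h2 \<in> Hom ar E {x0} Y"
    and gen: "h1 (cls ar E (Var x0)) = h2 (cls ar E (Var x0))"
  shows "h1 = h2"
proof -
  have "h1 (cls ar E t) = h2 (cls ar E t)" if "wf_trm ar t" "vars t \<subseteq> {x0}" for t
    using that
  proof (induction t)
    case (Var x)
    then show ?case using gen by simp
  next
    case (Op f ts)
    have l: "length ts = ar f" and wf: "\<forall>t\<in>set ts. wf_trm ar t \<and> vars t \<subseteq> {x0}"
      using Op.prems by auto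
    then have s: "set (map (cls ar E) ts) \<subseteq> fcarrier ar E {x0}"
      by (auto intro: cls_in_fcarrier)
    have l': "length (map (cls ar E) ts) = ar f"
      using l by simp
    have Op_cls: "cls ar E (Op f ts) = fops ar E f (map (cls ar E) ts)"
      using l wf by (simp add: fops_map_cls)
    have "map h1 (map (cls ar E) ts) = map h2 (map (cls ar E) ts)"
      using Op.IH wf by simp
    then show ?case
      by (simp only: Op_cls Hom_fops[OF h1 l' s] Hom_fops[OF h2 l' s])
  qed
  then have "\<forall>c\<in>fcarrier ar E {x0}. h1 c = h2 c"
    unfolding fcarrier_def by auto
  then show ?thesis
    using h1 h2 unfolding Hom_def by (auto intro: extensionalityI)
qed

lemma alpha_eqI:
  assumes "h \<in> Hom ar E {x0} Y" and "h (cls ar E (Var x0)) = c"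
  shows "alpha ar E x0 Y c = h"
  unfolding alpha_def
proof (rule the_equality)
  show "h \<in> Hom ar E {x0} Y \<and> h (cls ar E (Var x0)) = c"
    using assms by simp
  show "g = h" if "g \<in> Hom ar E {x0} Y \<and> g (cls ar E (Var x0)) = c" for g
    using that assms by (auto intro: Hom_monogenic_eqI)
qed

lemma alpha_in_Hom:
  assumes "c \<in> fcarrier ar E Y"
  shows "alpha ar E x0 Y c \<in> Hom ar E {x0} Y"
    and "alpha ar E x0 Y c (cls ar E (Var x0)) = c"
proof -
  obtain r where r: "c = cls ar E r" "wf_trm ar r" "vars r \<subseteq> Y"
    using assms unfolding fcarrier_def by blast
  let ?h = "subst_hom ar E {x0} (\<lambda>_. r)"
  have "?h \<in> Hom ar E {x0} Y"
    using r by (intro subst_hom_in_Hom) auto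
  moreover have "?h (cls ar E (Var x0)) = c"
    using r by (simp add: subst_hom_cls)
  ultimately have "alpha ar E x0 Y c = ?h"
    by (rule alpha_eqI)
  with \<open>?h \<in> Hom ar E {x0} Y\<close> \<open>?h (cls ar E (Var x0)) = c\<close>
  show "alpha ar E x0 Y c \<in> Hom ar E {x0} Y" "alpha ar E x0 Y c (cls ar E (Var x0)) = c"
    by simp_all
qed

lemma alpha_hom_image:
  assumes c: "c \<in> fcarrier ar E X" and \<theta>: "\<theta> \<in> Hom ar E X Y"
  shows "alpha ar E x0 Y (\<theta> c) = compose (fcarrier ar E {x0}) \<theta> (alpha ar E x0 X c)"
proof (rule alpha_eqI)
  show "compose (fcarrier ar E {x0}) \<theta> (alpha ar E x0 X c) \<in> Hom ar E {x0} Y"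
    using compose_in_Hom[OF alpha_in_Hom(1)[OF c] \<theta>] .
  show "compose (fcarrier ar E {x0}) \<theta> (alpha ar E x0 X c) (cls ar E (Var x0)) = \<theta> c"
    using alpha_in_Hom(2)[OF c] cls_in_fcarrier[of ar "Var x0" "{x0}" E]
    by (simp add: compose_def)
qed

lemma cat_auto_Hom:
  assumes "cat_auto ar E Ob \<Phi>o \<Phi>m" and "X \<in> Ob" and "Y \<in> Ob" and "f \<in> Hom ar E X Y"
  shows "\<Phi>m X Y f \<in> Hom ar E (\<Phi>o X) (\<Phi>o Y)"
proof -
  have "bij_betw (\<Phi>m X Y) (Hom ar E X Y) (Hom ar E (\<Phi>o X) (\<Phi>o Y))"
    using assms(1-3) unfolding cat_auto_def by simp
  then show ?thesis
    using assms(4) by (rule bij_betw_apply)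
qed

lemma cat_auto_compose:
  "cat_auto ar E Ob \<Phi>o \<Phi>m \<Longrightarrow> X \<in> Ob \<Longrightarrow> Y \<in> Ob \<Longrightarrow> Z \<in> Ob \<Longrightarrow>
   f \<in> Hom ar E X Y \<Longrightarrow> g \<in> Hom ar E Y Z \<Longrightarrow>
   \<Phi>m X Z (compose (fcarrier ar E X) g f)
     = compose (fcarrier ar E (\<Phi>o X)) (\<Phi>m Y Z g) (\<Phi>m X Y f)"
  unfolding cat_auto_def by simp

lemma cat_auto_inv_into:
  assumes "cat_auto ar E Ob \<Phi>o \<Phi>m" and "Y \<in> Ob"
  shows "inv_into Ob \<Phi>o Y \<in> Ob" and "\<Phi>o (inv_into Ob \<Phi>o Y) = Y"
proof -
  have "Y \<in> \<Phi>o ` Ob"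
    using assms unfolding cat_auto_def bij_betw_def by simp
  then show "inv_into Ob \<Phi>o Y \<in> Ob" and "\<Phi>o (inv_into Ob \<Phi>o Y) = Y"
    by (simp_all add: inv_into_into f_inv_into_f)
qed

lemma main_fn_hom_image:
  assumes cat: "cat_auto ar E Ob \<Phi>o \<Phi>m" and x0: "{x0} \<in> Ob"
    and \<eta>0: "\<eta>0 \<in> Hom ar E (inv_into Ob \<Phi>o {x0}) {x0}"
    and X: "X \<in> Ob" and Y: "Y \<in> Ob" and \<theta>: "\<theta> \<in> Hom ar E X Y"
    and c: "c \<in> fcarrier ar E X"
  shows "main_fn ar E Ob x0 \<Phi>o \<Phi>m \<eta>0 Y (\<theta> c) = \<Phi>m X Y \<theta> (main_fn ar E Ob x0 \<Phi>o \<Phi>m \<eta>0 X c)"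
proof -
  let ?P = "inv_into Ob \<Phi>o {x0}"
  let ?e = "\<Phi>m ?P {x0} \<eta>0 (cls ar E (Var x0))"
  have "\<Phi>m ?P {x0} \<eta>0 \<in> Hom ar E {x0} (\<Phi>o {x0})"
    using cat_auto_Hom[OF cat _ x0 \<eta>0] cat_auto_inv_into[OF cat x0] by simp
  then have e: "?e \<in> fcarrier ar E (\<Phi>o {x0})"
    using Hom_funcset cls_in_fcarrier[of ar "Var x0" "{x0}" E] by fastforce
  have "\<Phi>m {x0} Y (alpha ar E x0 Y (\<theta> c))
      = compose (fcarrier ar E (\<Phi>o {x0})) (\<Phi>m X Y \<theta>) (\<Phi>m {x0} X (alpha ar E x0 X c))"
    using alpha_hom_image[OF c \<theta>] cat_auto_compose[OF cat x0 X Y alpha_in_Hom(1)[OF c] \<theta>]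
    by simp
  then show ?thesis
    using e unfolding main_fn_def by (simp add: compose_def)
qed

theorem theorem4:
  fixes ar :: "'o \<Rightarrow> nat"
    and E :: "(('o,'v) trm \<times> ('o,'v) trm) set"
    and Ob :: "'v set set"
    and x0 :: 'v
    and \<Phi>o :: "'v set \<Rightarrow> 'v set"
    and \<Phi>m :: "'v set \<Rightarrow> 'v set \<Rightarrow> (('o,'v) trm set \<Rightarrow> ('o,'v) trm set) \<Rightarrow> (('o,'v) trm set \<Rightarrow> ('o,'v) trm set)"
    and \<eta>0 :: "('o,'v) trm set \<Rightarrow> ('o,'v) trm set"
    and n :: nat
    and F :: "'v set"
    and xs :: "('o,'v) trm set list"
    and A :: "'v set"
    and \<omega> :: 'o
    and as :: "('o,'v) trm set list"
    and \<theta> :: "('o,'v) trm set \<Rightarrow> ('o,'v) trm set"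
  assumes "infinite (UNIV :: 'v set)"
    and "variety ar E"
    and "\<forall>X\<in>Ob. finite X"
    and "{x0} \<in> Ob"
    and "cat_auto ar E Ob \<Phi>o \<Phi>m"
    and "eta0_ok ar E Ob x0 \<Phi>o \<eta>0"
    and "\<forall>f. ar f < n"
    and "F \<in> Ob" and "length xs = n" and "distinct xs" and "free_basis ar E F (set xs)"
    and "A \<in> Ob" and "length as = ar \<omega>" and "set as \<subseteq> fcarrier ar E A"
    and "\<theta> \<in> Hom ar E F A" and "\<forall>i<ar \<omega>. \<theta> (xs ! i) = as ! i"
  shows "main_fn ar E Ob x0 \<Phi>o \<Phi>m \<eta>0 A (fops ar E \<omega> as)
           = \<Phi>m F A \<theta> (main_fn ar E Ob x0 \<Phi>o \<Phi>m \<eta>0 F (fops ar E \<omega> (take (ar \<omega>) xs)))"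
proof -
  let ?ys = "take (ar \<omega>) xs"
  have len: "length ?ys = ar \<omega>"
    using assms(7,9) by (simp add: less_imp_le_nat)
  have "set xs \<subseteq> fcarrier ar E F"
    using assms(11) unfolding free_basis_def by (rule conjunct1)
  then have ys: "set ?ys \<subseteq> fcarrier ar E F"
    by (meson set_take_subset subset_trans)
  have "map \<theta> ?ys = as"
    using len assms(13,16) by (intro nth_equalityI) auto
  then have "\<theta> (fops ar E \<omega> ?ys) = fops ar E \<omega> as"
    using Hom_fops[OF assms(15) len ys] by simp
  moreover have "\<eta>0 \<in> Hom ar E (inv_into Ob \<Phi>o {x0}) {x0}"
    using assms(6) unfolding eta0_ok_def Let_def by (rule conjunct1)
  ultimately show ?thesis
    using main_fn_hom_image[OF assms(5,4) _ assms(8,12,15) fops_in_fcarrier[OF len ys]]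
    by simp
qed

end
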